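(* Under the standing assumptions below, let $k\in P$ and let $x\in D_k$ be decomposable. Then $x$ can be written in terms of indecomposable elements: there exist finitely many $\ell_1,\dots,\ell_n\in P$ with $\ell_i<k$ and indecomposable elements $x_i\in M_{\ell_i}$ (i.e. $x_i\in M_{\ell_i}\setminus D_{\ell_i}$) such that $x=\sum_{i=1}^n t^{\,k-\ell_i}x_i$.
   Context: Standing assumptions: $R$ is a principal ideal domain; $P$ is a lattice with a compatible abelian group structure ($(P,+,0)$ abelian group, $a\le b\Rightarrow a+c\le b+c$). $U_0=\{s\in P:s\ge 0\}$, $R[U_0]$ the monoid ring (finite sums $\sum c_st^s$, $c_s\in R$), graded by $\deg(ct^s)=s$. $M=\bigoplus_{a\in P}M_a$ is a $P$-graded $R[U_0]$-module (persistence module) that is graded projective, with each $M_a$ a finitely generated $R$-module. For $r\in P$, $D_r=\sum_{q<r}t^{\,r-q}M_q\subseteq M_r$ (sum of the images of structure maps from degrees $q<r$). An element $x\in M_r$ is decomposable if $x\in D_r$ and indecomposable if $x\in M_r\setminus D_r$. *)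

theory Defs
  imports Complex_Main
begin

definition is_pid :: "'r::idom itself \<Rightarrow> bool" where
  "is_pid _ \<longleftrightarrow>
     (\<forall>I::'r set. (0 \<in> I \<and> (\<forall>x\<in>I. \<forall>y\<in>I. x + y \<in> I) \<and> (\<forall>x\<in>I. \<forall>r. r * x \<in> I))
        \<longrightarrow> (\<exists>a. I = {r * a | r. True}))"

text \<open>A P-graded R[U_0]-module (persistence module), given by its homogeneous pieces
  Mg a (R-submodules of an ambient R-module) and the structure maps
  tm a b = multiplication by t^(b-a) from Mg a to Mg b, for a \<le> b.\<close>
definition pers_module ::
  "('r::comm_ring_1 \<Rightarrow> 'm::ab_group_add \<Rightarrow> 'm) \<Rightarrow> ('p::ordered_ab_group_add \<Rightarrow> 'm set)
     \<Rightarrow> ('p \<Rightarrow> 'p \<Rightarrow> 'm \<Rightarrow> 'm) \<Rightarrow> bool" where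
  "pers_module smul Mg tm \<longleftrightarrow>
     module smul \<and>
     (\<forall>a. module.subspace smul (Mg a)) \<and>
     (\<forall>a b. a \<le> b \<longrightarrow>
        (\<forall>x\<in>Mg a. tm a b x \<in> Mg b) \<and>
        (\<forall>x\<in>Mg a. \<forall>y\<in>Mg a. tm a b (x + y) = tm a b x + tm a b y) \<and>
        (\<forall>r. \<forall>x\<in>Mg a. tm a b (smul r x) = smul r (tm a b x))) \<and>
     (\<forall>a. \<forall>x\<in>Mg a. tm a a x = x) \<and>
     (\<forall>a b c. a \<le> b \<longrightarrow> b \<le> c \<longrightarrow> (\<forall>x\<in>Mg a. tm b c (tm a b x) = tm a c x))"

definition pieces_fin_gen ::
  "('r::comm_ring_1 \<Rightarrow> 'm::ab_group_add \<Rightarrow> 'm) \<Rightarrow> ('p \<Rightarrow> 'm set) \<Rightarrow> bool" where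
  "pieces_fin_gen smul Mg \<longleftrightarrow>
     (\<forall>a. \<exists>S. finite S \<and> S \<subseteq> Mg a \<and> module.span smul S = Mg a)"

text \<open>Degree-a piece of the graded free R[U_0]-module with basis indexed by 'i,
  basis element j in degree d j: finitely supported coefficient vectors, supported on
  the j with d j \<le> a (the coefficient of j stands for the multiple of t^(a - d j) e_j);
  the structure maps of this free module are the identity on coefficient vectors.\<close>
definition free_piece :: "('i \<Rightarrow> 'p::order) \<Rightarrow> 'p \<Rightarrow> ('i \<Rightarrow> 'r::zero) set" where
  "free_piece d a = {c. finite {j. c j \<noteq> 0} \<and> (\<forall>j. c j \<noteq> 0 \<longrightarrow> d j \<le> a)}"

definition graded_projective ::
  "'i itself \<Rightarrow> ('r::comm_ring_1 \<Rightarrow> 'm::ab_group_add \<Rightarrow> 'm) \<Rightarrow> ('p::ordered_ab_group_add \<Rightarrow> 'm set)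
     \<Rightarrow> ('p \<Rightarrow> 'p \<Rightarrow> 'm \<Rightarrow> 'm) \<Rightarrow> bool" where
  "graded_projective _ smul Mg tm \<longleftrightarrow>
     (\<exists>(d :: 'i \<Rightarrow> 'p) (\<iota> :: 'p \<Rightarrow> 'm \<Rightarrow> ('i \<Rightarrow> 'r)) (\<pi> :: 'p \<Rightarrow> ('i \<Rightarrow> 'r) \<Rightarrow> 'm).
        (\<forall>a. \<forall>x\<in>Mg a. \<iota> a x \<in> free_piece d a) \<and>
        (\<forall>a. \<forall>x\<in>Mg a. \<forall>y\<in>Mg a. \<iota> a (x + y) = (\<lambda>j. \<iota> a x j + \<iota> a y j)) \<and>
        (\<forall>a r. \<forall>x\<in>Mg a. \<iota> a (smul r x) = (\<lambda>j. r * \<iota> a x j)) \<and>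
        (\<forall>a b. a \<le> b \<longrightarrow> (\<forall>x\<in>Mg a. \<iota> b (tm a b x) = \<iota> a x)) \<and>
        (\<forall>a. \<forall>c\<in>free_piece d a. \<pi> a c \<in> Mg a) \<and>
        (\<forall>a. \<forall>c\<in>free_piece d a. \<forall>c'\<in>free_piece d a.
            \<pi> a (\<lambda>j. c j + c' j) = \<pi> a c + \<pi> a c') \<and>
        (\<forall>a r. \<forall>c\<in>free_piece d a. \<pi> a (\<lambda>j. r * c j) = smul r (\<pi> a c)) \<and>
        (\<forall>a b. a \<le> b \<longrightarrow> (\<forall>c\<in>free_piece d a. \<pi> b c = tm a b (\<pi> a c))) \<and>
        (\<forall>a. \<forall>x\<in>Mg a. \<pi> a (\<iota> a x) = x))"

definition Dec ::
  "('r::comm_ring_1 \<Rightarrow> 'm::ab_group_add \<Rightarrow> 'm) \<Rightarrow> ('p::order \<Rightarrow> 'm set)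
     \<Rightarrow> ('p \<Rightarrow> 'p \<Rightarrow> 'm \<Rightarrow> 'm) \<Rightarrow> 'p \<Rightarrow> 'm set" where
  "Dec smul Mg tm r = module.span smul (\<Union>q\<in>{q. q < r}. tm q r ` Mg q)"

end

theory Submission
  imports Defs
begin

text \<open>Write M as a graded direct summand of a free module, with embedding \<open>\<iota>\<close> and
  retraction \<open>\<pi>\<close>, and split the coefficient vector of \<open>y \<in> M\<^sub>b\<close> by the degrees \<open>c\<close> of the
  basis elements: \<open>y = \<Sum>\<^sub>c t\<^sup>b\<^sup>-\<^sup>c \<pi>\<^sub>c(v\<^sub>c)\<close>. For the largest degree \<open>c\<close> occurring, \<open>\<pi>\<^sub>c(v\<^sub>c)\<close> is
  indecomposable: decomposable elements of \<open>M\<^sub>c\<close> have coordinates only in degrees \<open>< c\<close>, and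
  the other summands have no coordinates in degree \<open>c\<close> at all. Every other summand lies in a
  degree below some degree of \<open>y\<close>, so its coordinates span a strictly smaller down-set of
  basis elements; since \<open>M\<^sub>k\<close> is finitely generated, all coordinates below \<open>k\<close> lie in one
  finite set of basis elements, and the recursion terminates.\<close>

lemma zero_in_free_piece: "(\<lambda>j. 0) \<in> free_piece d a"
  by (simp add: free_piece_def)

lemma free_piece_add:
  fixes c c' :: "'i \<Rightarrow> 'r::comm_monoid_add"
  assumes "c \<in> free_piece d a" and "c' \<in> free_piece d a"
  shows "(\<lambda>j. c j + c' j) \<in> free_piece d a"
proof -
  have "{j. c j + c' j \<noteq> 0} \<subseteq> {j. c j \<noteq> 0} \<union> {j. c' j \<noteq> 0}"
    by auto
  with assms show ?thesis
    unfolding free_piece_def by (auto intro: finite_subset)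
qed

lemma free_piece_sum:
  fixes f :: "'a \<Rightarrow> 'i \<Rightarrow> 'r::comm_monoid_add"
  shows "(\<And>c. c \<in> L \<Longrightarrow> f c \<in> free_piece d a) \<Longrightarrow> (\<lambda>j. \<Sum>c\<in>L. f c j) \<in> free_piece d a"
  by (induction L rule: infinite_finite_induct)
     (auto intro!: free_piece_add simp: zero_in_free_piece)

lemma free_piece_mono: "a \<le> b \<Longrightarrow> c \<in> free_piece d a \<Longrightarrow> c \<in> free_piece d b"
  unfolding free_piece_def using order_trans by blast

locale graded_summand =
  fixes smul :: "'r::comm_ring_1 \<Rightarrow> 'm::ab_group_add \<Rightarrow> 'm"
    and Mg :: "'p::order \<Rightarrow> 'm set"
    and tm :: "'p \<Rightarrow> 'p \<Rightarrow> 'm \<Rightarrow> 'm"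
    and d :: "'i \<Rightarrow> 'p"
    and \<iota> :: "'p \<Rightarrow> 'm \<Rightarrow> 'i \<Rightarrow> 'r"
    and \<pi> :: "'p \<Rightarrow> ('i \<Rightarrow> 'r) \<Rightarrow> 'm"
  assumes module: "module smul"
    and subspace_Mg: "module.subspace smul (Mg a)"
    and tm_in_Mg: "a \<le> b \<Longrightarrow> x \<in> Mg a \<Longrightarrow> tm a b x \<in> Mg b"
    and tm_add: "a \<le> b \<Longrightarrow> x \<in> Mg a \<Longrightarrow> y \<in> Mg a \<Longrightarrow> tm a b (x + y) = tm a b x + tm a b y"
    and tm_id: "x \<in> Mg a \<Longrightarrow> tm a a x = x"
    and tm_tm: "a \<le> b \<Longrightarrow> b \<le> c \<Longrightarrow> x \<in> Mg a \<Longrightarrow> tm b c (tm a b x) = tm a c x"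
    and iota_in_free_piece: "x \<in> Mg a \<Longrightarrow> \<iota> a x \<in> free_piece d a"
    and iota_add: "x \<in> Mg a \<Longrightarrow> y \<in> Mg a \<Longrightarrow> \<iota> a (x + y) = (\<lambda>j. \<iota> a x j + \<iota> a y j)"
    and iota_smul: "x \<in> Mg a \<Longrightarrow> \<iota> a (smul r x) = (\<lambda>j. r * \<iota> a x j)"
    and iota_tm: "a \<le> b \<Longrightarrow> x \<in> Mg a \<Longrightarrow> \<iota> b (tm a b x) = \<iota> a x"
    and pi_in_Mg: "u \<in> free_piece d a \<Longrightarrow> \<pi> a u \<in> Mg a"
    and pi_add: "u \<in> free_piece d a \<Longrightarrow> v \<in> free_piece d a \<Longrightarrow> \<pi> a (\<lambda>j. u j + v j) = \<pi> a u + \<pi> a v"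
    and pi_tm: "a \<le> b \<Longrightarrow> u \<in> free_piece d a \<Longrightarrow> \<pi> b u = tm a b (\<pi> a u)"
    and pi_iota: "x \<in> Mg a \<Longrightarrow> \<pi> a (\<iota> a x) = x"

lemma graded_summand_if_graded_projective:
  fixes smul :: "'r::comm_ring_1 \<Rightarrow> 'm::ab_group_add \<Rightarrow> 'm"
    and Mg :: "'p::ordered_ab_group_add \<Rightarrow> 'm set"
  assumes "pers_module smul Mg tm" and "graded_projective TYPE('i) smul Mg tm"
  obtains d :: "'i \<Rightarrow> 'p" and \<iota> \<pi> where "graded_summand smul Mg tm d \<iota> \<pi>"
  using assms unfolding pers_module_def graded_projective_def
  apply (elim exE conjE)
  subgoal for d \<iota> \<pi> by (rule that[of d \<iota> \<pi>], rule graded_summand.intro; simp)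
  done

context graded_summand
begin

lemma zero_in_Mg: "0 \<in> Mg a"
  using module.subspace_0[OF module subspace_Mg] .

lemma Mg_add: "x \<in> Mg a \<Longrightarrow> y \<in> Mg a \<Longrightarrow> x + y \<in> Mg a"
  using module.subspace_add[OF module subspace_Mg] .

lemma Mg_sum: "(\<And>c. c \<in> L \<Longrightarrow> f c \<in> Mg a) \<Longrightarrow> sum f L \<in> Mg a"
  using module.subspace_sum[OF module subspace_Mg] .

lemma Mg_smul: "x \<in> Mg a \<Longrightarrow> smul r x \<in> Mg a"
  using module.subspace_scale[OF module subspace_Mg] .

lemma tm_zero: "a \<le> b \<Longrightarrow> tm a b 0 = 0"
  using tm_add[of a b 0 0] zero_in_Mg by simp

lemma iota_zero: "\<iota> a 0 = (\<lambda>j. 0)"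
  using iota_add[of 0 a 0] zero_in_Mg by (simp add: fun_eq_iff)

lemma iota_sum:
  "(\<And>c. c \<in> L \<Longrightarrow> f c \<in> Mg a) \<Longrightarrow> \<iota> a (sum f L) = (\<lambda>j. \<Sum>c\<in>L. \<iota> a (f c) j)"
  by (induction L rule: infinite_finite_induct) (auto simp: iota_zero iota_add Mg_sum)

lemma pi_zero: "\<pi> a (\<lambda>j. 0) = 0"
  using pi_add[OF zero_in_free_piece zero_in_free_piece] by simp

lemma pi_sum:
  "(\<And>c. c \<in> L \<Longrightarrow> f c \<in> free_piece d a) \<Longrightarrow> \<pi> a (\<lambda>j. \<Sum>c\<in>L. f c j) = (\<Sum>c\<in>L. \<pi> a (f c))"
  by (induction L rule: infinite_finite_induct) (auto simp: pi_zero pi_add free_piece_sum)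

lemma Dec_support_below:
  "Dec smul Mg tm c \<subseteq> {z \<in> Mg c. \<forall>j. \<iota> c z j \<noteq> 0 \<longrightarrow> d j < c}"
  unfolding Dec_def
proof (rule module.span_minimal[OF module])
  show "(\<Union>q\<in>{q. q < c}. tm q c ` Mg q) \<subseteq> {z \<in> Mg c. \<forall>j. \<iota> c z j \<noteq> 0 \<longrightarrow> d j < c}"
  proof clarify
    fix q y assume "q < c" and "y \<in> Mg q"
    then have "\<iota> c (tm q c y) = \<iota> q y" and "\<iota> q y \<in> free_piece d q"
      by (simp_all add: iota_tm iota_in_free_piece)
    with \<open>q < c\<close> \<open>y \<in> Mg q\<close> show "tm q c y \<in> Mg c \<and> (\<forall>j. \<iota> c (tm q c y) j \<noteq> 0 \<longrightarrow> d j < c)"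
      unfolding free_piece_def by (auto intro: tm_in_Mg le_less_trans)
  qed
  show "module.subspace smul {z \<in> Mg c. \<forall>j. \<iota> c z j \<noteq> 0 \<longrightarrow> d j < c}"
    by (rule module.subspaceI[OF module])
       (auto simp: zero_in_Mg Mg_add Mg_smul iota_zero iota_add iota_smul,
        metis add.right_neutral, metis mult_zero_right)
qed

definition indecomposable :: "'p \<Rightarrow> 'm \<Rightarrow> bool" where
  "indecomposable c z \<longleftrightarrow> z \<in> Mg c \<and> z \<notin> Dec smul Mg tm c"

inductive_set indec_sums :: "('p \<Rightarrow> bool) \<Rightarrow> 'p \<Rightarrow> 'm set" for R b where
  zero: "0 \<in> indec_sums R b"
| add_translate: "R l \<Longrightarrow> indecomposable l z \<Longrightarrow> s \<in> indec_sums R b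
    \<Longrightarrow> tm l b z + s \<in> indec_sums R b"

lemma indec_sums_add:
  "s \<in> indec_sums R b \<Longrightarrow> s' \<in> indec_sums R b \<Longrightarrow> s + s' \<in> indec_sums R b"
  by (induction rule: indec_sums.induct) (auto simp: add.assoc intro: indec_sums.intros)

lemma indec_sums_sum:
  "(\<And>c. c \<in> L \<Longrightarrow> f c \<in> indec_sums R b) \<Longrightarrow> sum f L \<in> indec_sums R b"
  by (induction L rule: infinite_finite_induct) (auto intro: indec_sums.zero indec_sums_add)

lemma indecomposable_in_indec_sums:
  "R c \<Longrightarrow> indecomposable c z \<Longrightarrow> z \<in> indec_sums R c"
  using indec_sums.add_translate[OF _ _ indec_sums.zero, of R c z c]
  by (simp add: indecomposable_def tm_id)

lemma indec_sums_subset_Mg: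
  "(\<And>l. R l \<Longrightarrow> l \<le> b) \<Longrightarrow> indec_sums R b \<subseteq> Mg b"
proof
  show "s \<in> Mg b" if "s \<in> indec_sums R b" and "\<And>l. R l \<Longrightarrow> l \<le> b" for s
    using that by induction (auto simp: zero_in_Mg indecomposable_def intro: Mg_add tm_in_Mg)
qed

lemma tm_indec_sums:
  assumes "s \<in> indec_sums R c" and "\<And>l. R l \<Longrightarrow> l \<le> c" and "\<And>l. R l \<Longrightarrow> R' l" and "c \<le> b"
  shows "tm c b s \<in> indec_sums R' b"
  using assms(1)
proof induction
  case zero
  show ?case using tm_zero[OF \<open>c \<le> b\<close>] by (simp add: indec_sums.zero)
next
  case (add_translate l z s)
  then have "l \<le> c" and "z \<in> Mg l" and "s \<in> Mg c"
    using assms(2) indec_sums_subset_Mg[of R c] by (auto simp: indecomposable_def)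
  then have "tm c b (tm l c z + s) = tm l b z + tm c b s"
    using \<open>c \<le> b\<close> by (simp add: tm_add tm_in_Mg tm_tm)
  with add_translate assms(3) show ?case
    by (simp add: indec_sums.add_translate)
qed

lemma indec_sums_explicit:
  assumes "s \<in> indec_sums R b"
  shows "\<exists>(n::nat) l xs. (\<forall>i<n. R (l i) \<and> indecomposable (l i) (xs i)) \<and> s = (\<Sum>i<n. tm (l i) b (xs i))"
  using assms
proof induction
  case zero
  show ?case by (rule exI[of _ 0]) simp
next
  case (add_translate l z s)
  from add_translate.IH obtain n :: nat and ls xs where "\<forall>i<n. R (ls i) \<and> indecomposable (ls i) (xs i)"
    and "s = (\<Sum>i<n. tm (ls i) b (xs i))"
    by auto
  with add_translate.hyps show ?case
    by (intro exI[of _ "Suc n"] exI[of _ "case_nat l ls"] exI[of _ "case_nat z xs"])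
       (auto simp: sum.lessThan_Suc_shift less_Suc_eq_0_disj simp del: sum.lessThan_Suc)
qed

definition degrees :: "('i \<Rightarrow> 'r) \<Rightarrow> 'p set" where
  "degrees v = d ` {j. v j \<noteq> 0}"

definition degree_part :: "('i \<Rightarrow> 'r) \<Rightarrow> 'p \<Rightarrow> 'i \<Rightarrow> 'r" where
  "degree_part v c j = (if d j = c then v j else 0)"

definition component :: "'p \<Rightarrow> 'm \<Rightarrow> 'p \<Rightarrow> 'm" where
  "component b y c = \<pi> c (degree_part (\<iota> b y) c)"

lemma finite_degrees: "v \<in> free_piece d b \<Longrightarrow> finite (degrees v)"
  by (simp add: degrees_def free_piece_def)

lemma degrees_le: "v \<in> free_piece d b \<Longrightarrow> c \<in> degrees v \<Longrightarrow> c \<le> b"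
  by (auto simp: degrees_def free_piece_def)

lemma degree_part_in_free_piece: "v \<in> free_piece d b \<Longrightarrow> degree_part v c \<in> free_piece d c"
  unfolding free_piece_def degree_part_def by (auto elim: rev_finite_subset)

lemma sum_degree_parts:
  assumes "v \<in> free_piece d b"
  shows "(\<lambda>j. \<Sum>c\<in>degrees v. degree_part v c j) = v"
proof
  fix j
  show "(\<Sum>c\<in>degrees v. degree_part v c j) = v j"
  proof (cases "v j = 0")
    case False
    then have "d j \<in> degrees v"
      by (simp add: degrees_def)
    with finite_degrees[OF assms] show ?thesis
      by (simp add: degree_part_def)
  next
    case True
    then show ?thesis
      by (simp add: degree_part_def sum.neutral)
  qed
qed

lemma component_in_Mg: "y \<in> Mg b \<Longrightarrow> component b y c \<in> Mg c"
  unfolding component_def by (blast intro: pi_in_Mg degree_part_in_free_piece iota_in_free_piece)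

lemma sum_components:
  assumes "y \<in> Mg b"
  shows "(\<Sum>c\<in>degrees (\<iota> b y). tm c b (component b y c)) = y"
proof -
  let ?v = "\<iota> b y"
  have v: "?v \<in> free_piece d b"
    using assms by (rule iota_in_free_piece)
  have "(\<Sum>c\<in>degrees ?v. tm c b (component b y c)) = (\<Sum>c\<in>degrees ?v. \<pi> b (degree_part ?v c))"
    using v by (intro sum.cong) (simp_all add: component_def pi_tm[OF degrees_le degree_part_in_free_piece])
  also have "\<dots> = \<pi> b (\<lambda>j. \<Sum>c\<in>degrees ?v. degree_part ?v c j)"
    using v by (intro pi_sum[symmetric]) (blast intro: free_piece_mono degrees_le degree_part_in_free_piece)
  also have "\<dots> = y"
    using v assms by (simp add: sum_degree_parts pi_iota)
  finally show ?thesis .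
qed

lemma iota_sum_components:
  assumes "y \<in> Mg b"
  shows "(\<Sum>c\<in>degrees (\<iota> b y). \<iota> c (component b y c) j) = \<iota> b y j"
proof -
  have le: "c \<le> b" if "c \<in> degrees (\<iota> b y)" for c
    using degrees_le[OF iota_in_free_piece[OF assms] that] .
  have "\<iota> b y = \<iota> b (\<Sum>c\<in>degrees (\<iota> b y). tm c b (component b y c))"
    using assms by (simp add: sum_components)
  also have "\<dots> = (\<lambda>j. \<Sum>c\<in>degrees (\<iota> b y). \<iota> c (component b y c) j)"
    using assms le by (simp add: iota_sum iota_tm tm_in_Mg component_in_Mg)
  finally show ?thesis
    by (simp add: fun_eq_iff)
qed

lemma top_component_indecomposable:
  assumes y: "y \<in> Mg b" and c: "c \<in> degrees (\<iota> b y)"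
    and top: "\<And>c'. c' \<in> degrees (\<iota> b y) \<Longrightarrow> c' \<le> c"
  shows "indecomposable c (component b y c)"
  unfolding indecomposable_def
proof
  show "component b y c \<in> Mg c"
    using y by (rule component_in_Mg)
  obtain j where j: "\<iota> b y j \<noteq> 0" "d j = c"
    using c by (auto simp: degrees_def)
  show "component b y c \<notin> Dec smul Mg tm c"
  proof
    assume dec: "component b y c \<in> Dec smul Mg tm c"
    have "\<iota> c' (component b y c') j = 0" if c': "c' \<in> degrees (\<iota> b y)" for c'
    proof (cases "c' = c")
      case True
      with dec Dec_support_below j(2) show ?thesis
        by blast
    next
      case False
      with top[OF c'] j(2) have "\<not> d j \<le> c'"
        by auto
      moreover have "\<iota> c' (component b y c') \<in> free_piece d c'"
        using y by (simp add: iota_in_free_piece component_in_Mg)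
      ultimately show ?thesis
        by (auto simp: free_piece_def)
    qed
    then have "\<iota> b y j = 0"
      using iota_sum_components[OF y, of j] by simp
    with j(1) show False ..
  qed
qed

text \<open>Termination measure of the degree-splitting recursion.\<close>

definition lower_support :: "'i set \<Rightarrow> 'p \<Rightarrow> 'm \<Rightarrow> 'i set" where
  "lower_support J b y = {j \<in> J. \<exists>c\<in>degrees (\<iota> b y). d j \<le> c}"

lemma lower_support_component_psubset:
  assumes y: "y \<in> Mg b" and c: "c \<in> degrees (\<iota> b y)"
    and c': "c' \<in> degrees (\<iota> b y)" "\<not> c' \<le> c"
    and J: "{j. \<iota> b y j \<noteq> 0} \<subseteq> J"
  shows "lower_support J c (component b y c) \<subset> lower_support J b y"
proof
  have below_c: "e \<le> c" if "e \<in> degrees (\<iota> c (component b y c))" for e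
    using that y by (blast intro: degrees_le iota_in_free_piece component_in_Mg)
  then show "lower_support J c (component b y c) \<subseteq> lower_support J b y"
    using c by (auto simp: lower_support_def intro: order_trans)
  obtain i where i: "\<iota> b y i \<noteq> 0" "d i = c'"
    using c' by (auto simp: degrees_def)
  with J c' have "i \<in> lower_support J b y"
    by (auto simp: lower_support_def degrees_def)
  moreover have "i \<notin> lower_support J c (component b y c)"
    using i c' below_c by (auto simp: lower_support_def dest: order_trans)
  ultimately show "lower_support J c (component b y c) \<noteq> lower_support J b y"
    by blast
qed

context
  fixes k :: 'p and J :: "'i set"
  assumes finite_J: "finite J"
    and support_in_J: "\<And>b y. b \<le> k \<Longrightarrow> y \<in> Mg b \<Longrightarrow> {j. \<iota> b y j \<noteq> 0} \<subseteq> J"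
begin

lemma Mg_in_indec_sums: "b \<le> k \<Longrightarrow> y \<in> Mg b \<Longrightarrow> y \<in> indec_sums (\<lambda>l. l \<le> b) b"
proof (induction "card (lower_support J b y)" arbitrary: b y rule: less_induct)
  case less
  have le_b: "c \<le> b" if "c \<in> degrees (\<iota> b y)" for c
    using degrees_le[OF iota_in_free_piece[OF less.prems(2)] that] .
  have component: "component b y c \<in> indec_sums (\<lambda>l. l \<le> c) c" if c: "c \<in> degrees (\<iota> b y)" for c
  proof (cases "\<forall>c'\<in>degrees (\<iota> b y). c' \<le> c")
    case True
    with less.prems(2) c show ?thesis
      by (intro indecomposable_in_indec_sums top_component_indecomposable) auto
  next
    case False
    then obtain c' where "c' \<in> degrees (\<iota> b y)" "\<not> c' \<le> c"
      by blast
    with less.prems c support_in_J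
    have "lower_support J c (component b y c) \<subset> lower_support J b y"
      by (intro lower_support_component_psubset) auto
    then have "card (lower_support J c (component b y c)) < card (lower_support J b y)"
      using finite_J by (intro psubset_card_mono) (auto simp: lower_support_def)
    moreover have "c \<le> k"
      using le_b[OF c] less.prems(1) by (rule order_trans)
    ultimately show ?thesis
      using less.hyps less.prems(2) by (simp add: component_in_Mg)
  qed
  then have "(\<Sum>c\<in>degrees (\<iota> b y). tm c b (component b y c)) \<in> indec_sums (\<lambda>l. l \<le> b) b"
    using le_b by (intro indec_sums_sum tm_indec_sums[OF component]) (auto intro: order_trans)
  with less.prems(2) show ?case
    by (simp add: sum_components)
qed

lemma Dec_in_indec_sums:
  assumes x: "x \<in> Dec smul Mg tm k"
  shows "x \<in> indec_sums (\<lambda>l. l < k) k"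
proof -
  have "x \<in> Mg k" and "\<And>j. \<iota> k x j \<noteq> 0 \<Longrightarrow> d j < k"
    using Dec_support_below x by auto
  then have less_k: "c < k" if "c \<in> degrees (\<iota> k x)" for c
    using that by (auto simp: degrees_def)
  have component: "component k x c \<in> indec_sums (\<lambda>l. l \<le> c) c" if "c \<in> degrees (\<iota> k x)" for c
    using less_k[OF that] \<open>x \<in> Mg k\<close> by (intro Mg_in_indec_sums component_in_Mg) auto
  then have "(\<Sum>c\<in>degrees (\<iota> k x). tm c k (component k x c)) \<in> indec_sums (\<lambda>l. l < k) k"
    using less_k by (intro indec_sums_sum tm_indec_sums[OF component]) (auto intro: le_less_trans less_imp_le)
  with \<open>x \<in> Mg k\<close> show ?thesis
    by (simp add: sum_components)
qed

end

lemma uniform_finite_support: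
  assumes S: "finite S" "S \<subseteq> Mg k" "module.span smul S = Mg k"
  obtains J where "finite J" and "\<And>b y. b \<le> k \<Longrightarrow> y \<in> Mg b \<Longrightarrow> {j. \<iota> b y j \<noteq> 0} \<subseteq> J"
proof
  let ?J = "\<Union>s\<in>S. {j. \<iota> k s j \<noteq> 0}"
  show "finite ?J"
    using S(1,2) iota_in_free_piece by (auto simp: free_piece_def)
  fix b y assume "b \<le> k" and "y \<in> Mg b"
  then have "tm b k y \<in> module.span smul S"
    using S(3) by (simp add: tm_in_Mg)
  then obtain u where u: "tm b k y = (\<Sum>s\<in>S. smul (u s) s)"
    using module.span_finite[OF module S(1)] by auto
  have "\<iota> b y = \<iota> k (tm b k y)"
    using \<open>b \<le> k\<close> \<open>y \<in> Mg b\<close> by (simp add: iota_tm)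
  also have "\<dots> = (\<lambda>j. \<Sum>s\<in>S. \<iota> k (smul (u s) s) j)"
    using S(2) by (simp add: u iota_sum Mg_smul subset_iff)
  also have "\<dots> = (\<lambda>j. \<Sum>s\<in>S. u s * \<iota> k s j)"
    using S(2) by (simp add: iota_smul subset_iff cong: sum.cong)
  finally show "{j. \<iota> b y j \<noteq> 0} \<subseteq> ?J"
    by (force elim: sum.not_neutral_contains_not_neutral)
qed

end

theorem lemma4p5:
  fixes smul :: "'r::idom \<Rightarrow> 'm::ab_group_add \<Rightarrow> 'm"
    and Mg :: "'p::{lattice, ordered_ab_group_add} \<Rightarrow> 'm set"
    and tm :: "'p \<Rightarrow> 'p \<Rightarrow> 'm \<Rightarrow> 'm"
    and k :: 'p and x :: 'm
  assumes "is_pid TYPE('r)"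
    and "pers_module smul Mg tm"
    and "graded_projective TYPE('i) smul Mg tm"
    and "pieces_fin_gen smul Mg"
    and "x \<in> Dec smul Mg tm k"
  shows "\<exists>(n::nat) (l :: nat \<Rightarrow> 'p) (xs :: nat \<Rightarrow> 'm).
           (\<forall>i<n. l i < k \<and> xs i \<in> Mg (l i) \<and> xs i \<notin> Dec smul Mg tm (l i)) \<and>
           x = (\<Sum>i<n. tm (l i) k (xs i))"
proof -
  obtain d :: "'i \<Rightarrow> 'p" and \<iota> \<pi> where "graded_summand smul Mg tm d \<iota> \<pi>"
    using assms(2,3) by (rule graded_summand_if_graded_projective)
  then interpret graded_summand smul Mg tm d \<iota> \<pi> .
  obtain S where "finite S" "S \<subseteq> Mg k" "module.span smul S = Mg k"
    using assms(4) unfolding pieces_fin_gen_def by blast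
  then obtain J where "finite J" "\<And>b y. b \<le> k \<Longrightarrow> y \<in> Mg b \<Longrightarrow> {j. \<iota> b y j \<noteq> 0} \<subseteq> J"
    by (rule uniform_finite_support) blast
  then have "x \<in> indec_sums (\<lambda>l. l < k) k"
    using assms(5) by (rule Dec_in_indec_sums)
  then show ?thesis
    unfolding indecomposable_def[symmetric] by (rule indec_sums_explicit)
qed

end
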